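(* Let $B\ge1$, $\mathcal{E}>0$, $0<\epsilon\le1$. Run the alternate convex search algorithm described in the context with starting point $\mathbf{i}^{(0)}=(2,\dots,2)$. If $t_b^{(1)}\neq0$ for all $b\in\{0,\dots,B-1\}$, then $\lim_{k\to\infty}(\mathbf{i}^{(k)},\mathbf{t}^{(k)})=(\mathbf{i}^{(0)},\mathbf{t}^{(1)})$.
   Context: Alternate convex search (ACS): given $\mathbf{i}^{(0)}$ with $i^{(0)}_b\ge1+\epsilon$, for $k=0,1,2,\dots$: (1) with $\mathbf{i}^{(k)}$ fixed, let $\mathbf{t}^{(k+1)}$ be an optimal solution of: minimize over $\mathbf{t}\in\mathbb{R}^B$ the quantity $\sum_{b=0}^{B-1}4^b\exp(-2(i_b^{(k)}-1)t_b)$ subject to $\sum_b(i_b^{(k)})^2t_b\le\mathcal{E}$, $t_b\ge0$; (2) with $\mathbf{t}^{(k+1)}$ fixed, let $\mathbf{i}^{(k+1)}$ be an optimal solution of: minimize over $\mathbf{i}\in\mathbb{R}^B$ the quantity $\sum_b4^b\exp(-2(i_b-1)t_b^{(k+1)})$ subject to $\sum_bi_b^2t_b^{(k+1)}\le\mathcal{E}$, $i_b\ge1+\epsilon$. *)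

theory Defs
  imports Complex_Main
begin

text \<open>Vectors in R^B are represented as functions nat => real, of which only the
  coordinates b < B are meaningful.\<close>

definition acs_obj :: "nat \<Rightarrow> (nat \<Rightarrow> real) \<Rightarrow> (nat \<Rightarrow> real) \<Rightarrow> real" where
  "acs_obj B i t = (\<Sum>b<B. (4::real) ^ b * exp (- 2 * (i b - 1) * t b))"

definition acs_energy :: "nat \<Rightarrow> (nat \<Rightarrow> real) \<Rightarrow> (nat \<Rightarrow> real) \<Rightarrow> real" where
  "acs_energy B i t = (\<Sum>b<B. (i b)^2 * t b)"

definition feasible_t :: "nat \<Rightarrow> real \<Rightarrow> (nat \<Rightarrow> real) \<Rightarrow> (nat \<Rightarrow> real) \<Rightarrow> bool" where
  "feasible_t B E i t \<longleftrightarrow> acs_energy B i t \<le> E \<and> (\<forall>b<B. t b \<ge> 0)"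

definition feasible_i :: "nat \<Rightarrow> real \<Rightarrow> real \<Rightarrow> (nat \<Rightarrow> real) \<Rightarrow> (nat \<Rightarrow> real) \<Rightarrow> bool" where
  "feasible_i B E \<epsilon> t i \<longleftrightarrow> acs_energy B i t \<le> E \<and> (\<forall>b<B. i b \<ge> 1 + \<epsilon>)"

definition optimal_t :: "nat \<Rightarrow> real \<Rightarrow> (nat \<Rightarrow> real) \<Rightarrow> (nat \<Rightarrow> real) \<Rightarrow> bool" where
  "optimal_t B E i t \<longleftrightarrow> feasible_t B E i t \<and>
     (\<forall>t'. feasible_t B E i t' \<longrightarrow> acs_obj B i t \<le> acs_obj B i t')"

definition optimal_i :: "nat \<Rightarrow> real \<Rightarrow> real \<Rightarrow> (nat \<Rightarrow> real) \<Rightarrow> (nat \<Rightarrow> real) \<Rightarrow> bool" where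
  "optimal_i B E \<epsilon> t i \<longleftrightarrow> feasible_i B E \<epsilon> t i \<and>
     (\<forall>i'. feasible_i B E \<epsilon> t i' \<longrightarrow> acs_obj B i t \<le> acs_obj B i' t)"

text \<open>A run of alternate convex search: sequences i (k) and t (k) (t 0 is unused)
  such that each step returns an optimal solution of the respective subproblem.\<close>
definition acs_run :: "nat \<Rightarrow> real \<Rightarrow> real \<Rightarrow> (nat \<Rightarrow> nat \<Rightarrow> real) \<Rightarrow> (nat \<Rightarrow> nat \<Rightarrow> real) \<Rightarrow> bool" where
  "acs_run B E \<epsilon> I T \<longleftrightarrow>
     (\<forall>k. optimal_t B E (I k) (T (Suc k)) \<and> optimal_i B E \<epsilon> (T (Suc k)) (I (Suc k)))"

end

theory Submission
  imports Defs
begin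

text \<open>Both subproblems minimise a strictly convex function over a convex set (strictly in the
  coordinates b with t b \<noteq> 0, resp. i b \<noteq> 1), so their solutions are unique. For the
  constant starting point i = 2, first-order optimality of t(1) makes the energy constraint
  active and, since t(1) is positive, equalises the terms 4^b exp (-2 t(1)_b) at a common
  value c. Bounding exp from below by its tangent at that common value shows that i(0) solves
  subproblem (2) for t(1); by uniqueness the iteration is constant from then on.\<close>

lemma sum_diff_eq_sum_on_support:
  fixes f g :: "'a \<Rightarrow> 'b::ab_group_add"
  assumes "finite A" "S \<subseteq> A" "\<forall>c\<in>A - S. f c = g c"
  shows "sum f A - sum g A = (\<Sum>c\<in>S. f c - g c)"
proof -
  have "sum f A - sum g A = (\<Sum>c\<in>A. f c - g c)" by (simp add: sum_subtractf)
  also have "\<dots> = (\<Sum>c\<in>S. f c - g c)" using assms by (intro sum.mono_neutral_right) auto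
  finally show ?thesis .
qed

lemma DERIV_nonneg_if_right_local_min:
  fixes g :: "real \<Rightarrow> real"
  assumes "(g has_real_derivative D) (at x)" "0 < \<delta>"
    and "\<And>h. 0 < h \<Longrightarrow> h \<le> \<delta> \<Longrightarrow> g x \<le> g (x + h)"
  shows "0 \<le> D"
proof (rule ccontr)
  assume "\<not> 0 \<le> D"
  then obtain d where "0 < d" "\<forall>h>0. h < d \<longrightarrow> g (x + h) < g x"
    using DERIV_neg_dec_right[OF assms(1)] by force
  moreover have "0 < min (d / 2) \<delta>" "min (d / 2) \<delta> < d" "min (d / 2) \<delta> \<le> \<delta>"
    using \<open>0 < d\<close> assms(2) by auto
  ultimately show False using assms(3) by (meson not_le)
qed

lemma exp_midpoint_less:
  fixes x y :: real
  assumes "x \<noteq> y"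
  shows "exp ((x + y) / 2) < (exp x + exp y) / 2"
proof -
  define u v where "u = exp (x / 2)" and "v = exp (y / 2)"
  have "u \<noteq> v" using assms by (simp add: u_def v_def)
  hence "0 < (u - v)\<^sup>2" by simp
  hence "u * v < (u\<^sup>2 + v\<^sup>2) / 2" by (simp add: power2_eq_square algebra_simps)
  moreover have "exp ((x + y) / 2) = u * v" "exp x = u\<^sup>2" "exp y = v\<^sup>2"
    by (simp_all add: u_def v_def power2_eq_square flip: exp_add)
  ultimately show ?thesis by simp
qed

lemma sum_exp_midpoint_less:
  fixes w u v :: "'a \<Rightarrow> real"
  assumes "finite A" "\<forall>c\<in>A. 0 < w c" "k \<in> A" "u k \<noteq> v k"
  shows "(\<Sum>c\<in>A. w c * exp ((u c + v c) / 2))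
    < ((\<Sum>c\<in>A. w c * exp (u c)) + (\<Sum>c\<in>A. w c * exp (v c))) / 2"
proof -
  have "exp ((u c + v c) / 2) \<le> (exp (u c) + exp (v c)) / 2" for c
    using exp_midpoint_less[of "u c" "v c"] by (cases "u c = v c") auto
  hence "\<forall>c\<in>A. w c * exp ((u c + v c) / 2) \<le> w c * ((exp (u c) + exp (v c)) / 2)"
    using assms(2) by (simp add: mult_left_mono)
  moreover have "w k * exp ((u k + v k) / 2) < w k * ((exp (u k) + exp (v k)) / 2)"
    using assms exp_midpoint_less[of "u k" "v k"] by simp
  ultimately have "(\<Sum>c\<in>A. w c * exp ((u c + v c) / 2))
      < (\<Sum>c\<in>A. w c * ((exp (u c) + exp (v c)) / 2))"
    using assms by (intro sum_strict_mono_ex1) auto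
  also have "\<dots> = ((\<Sum>c\<in>A. w c * exp (u c)) + (\<Sum>c\<in>A. w c * exp (v c))) / 2"
    by (simp add: distrib_left sum.distrib flip: sum_divide_distrib)
  finally show ?thesis .
qed

lemma acs_obj_midpoint_i_less:
  assumes "b < B" "t b \<noteq> 0" "i b \<noteq> i' b"
  shows "acs_obj B (\<lambda>c. (i c + i' c) / 2) t < (acs_obj B i t + acs_obj B i' t) / 2"
proof -
  define u v where "u c = - 2 * (i c - 1) * t c" and "v c = - 2 * (i' c - 1) * t c" for c
  have "acs_obj B (\<lambda>c. (i c + i' c) / 2) t = (\<Sum>c<B. 4 ^ c * exp ((u c + v c) / 2))"
    unfolding acs_obj_def u_def v_def by (intro sum.cong) (simp_all add: field_simps)
  also have "\<dots> < (acs_obj B i t + acs_obj B i' t) / 2"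
    unfolding acs_obj_def u_def v_def using assms by (intro sum_exp_midpoint_less) auto
  finally show ?thesis .
qed

lemma acs_obj_midpoint_t_less:
  assumes "b < B" "i b \<noteq> 1" "t b \<noteq> t' b"
  shows "acs_obj B i (\<lambda>c. (t c + t' c) / 2) < (acs_obj B i t + acs_obj B i t') / 2"
proof -
  define u v where "u c = - 2 * (i c - 1) * t c" and "v c = - 2 * (i c - 1) * t' c" for c
  have "acs_obj B i (\<lambda>c. (t c + t' c) / 2) = (\<Sum>c<B. 4 ^ c * exp ((u c + v c) / 2))"
    unfolding acs_obj_def u_def v_def by (intro sum.cong) (simp_all add: field_simps)
  also have "\<dots> < (acs_obj B i t + acs_obj B i t') / 2"
    unfolding acs_obj_def u_def v_def using assms by (intro sum_exp_midpoint_less) auto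
  finally show ?thesis .
qed

lemma acs_energy_midpoint_i_le:
  assumes "\<forall>c<B. 0 \<le> t c"
  shows "acs_energy B (\<lambda>c. (i c + i' c) / 2) t \<le> (acs_energy B i t + acs_energy B i' t) / 2"
proof -
  have "((i c + i' c) / 2)\<^sup>2 * t c \<le> ((i c)\<^sup>2 * t c + (i' c)\<^sup>2 * t c) / 2" if "c < B" for c
  proof -
    have "0 \<le> (i c - i' c)\<^sup>2 * t c" using assms that by simp
    thus ?thesis by (simp add: power2_eq_square field_simps)
  qed
  hence "acs_energy B (\<lambda>c. (i c + i' c) / 2) t \<le> (\<Sum>c<B. ((i c)\<^sup>2 * t c + (i' c)\<^sup>2 * t c) / 2)"
    unfolding acs_energy_def by (intro sum_mono) auto
  also have "\<dots> = (acs_energy B i t + acs_energy B i' t) / 2"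
    by (simp add: acs_energy_def sum.distrib flip: sum_divide_distrib)
  finally show ?thesis .
qed

lemma acs_energy_midpoint_t:
  "acs_energy B i (\<lambda>c. (t c + t' c) / 2) = (acs_energy B i t + acs_energy B i t') / 2"
  by (simp add: acs_energy_def sum.distrib distrib_left add_divide_distrib sum_divide_distrib)

lemma feasible_i_midpoint:
  assumes "feasible_i B E \<epsilon> t i" "feasible_i B E \<epsilon> t i'" "\<forall>c<B. 0 \<le> t c"
  shows "feasible_i B E \<epsilon> t (\<lambda>c. (i c + i' c) / 2)"
  unfolding feasible_i_def
proof (intro conjI allI impI)
  show "acs_energy B (\<lambda>c. (i c + i' c) / 2) t \<le> E"
    using assms acs_energy_midpoint_i_le[OF assms(3), of i i'] by (simp add: feasible_i_def)
  fix b assume "b < B"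
  with assms(1,2) have "1 + \<epsilon> \<le> i b" "1 + \<epsilon> \<le> i' b" by (simp_all add: feasible_i_def)
  thus "1 + \<epsilon> \<le> (i b + i' b) / 2" by simp
qed

lemma feasible_t_midpoint:
  assumes "feasible_t B E i t" "feasible_t B E i t'"
  shows "feasible_t B E i (\<lambda>c. (t c + t' c) / 2)"
  using assms acs_energy_midpoint_t[of B i t t'] by (simp add: feasible_t_def)

lemma optimal_i_unique:
  assumes "optimal_i B E \<epsilon> t i" "optimal_i B E \<epsilon> t i'"
    and "\<forall>c<B. 0 \<le> t c" "b < B" "t b \<noteq> 0"
  shows "i b = i' b"
proof (rule ccontr)
  assume ne: "i b \<noteq> i' b"
  define m where "m c = (i c + i' c) / 2" for c
  have "feasible_i B E \<epsilon> t m"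
    using assms(1-3) feasible_i_midpoint unfolding optimal_i_def m_def by blast
  hence "acs_obj B i t \<le> acs_obj B m t" "acs_obj B i' t \<le> acs_obj B m t"
    using assms(1,2) by (simp_all add: optimal_i_def)
  moreover have "acs_obj B m t < (acs_obj B i t + acs_obj B i' t) / 2"
    unfolding m_def using assms(4,5) ne by (rule acs_obj_midpoint_i_less)
  ultimately show False by (simp add: field_simps)
qed

lemma optimal_t_unique:
  assumes "optimal_t B E i t" "optimal_t B E i t'" "b < B" "i b \<noteq> 1"
  shows "t b = t' b"
proof (rule ccontr)
  assume ne: "t b \<noteq> t' b"
  define m where "m c = (t c + t' c) / 2" for c
  have "feasible_t B E i m"
    using assms(1,2) feasible_t_midpoint unfolding optimal_t_def m_def by blast
  hence "acs_obj B i t \<le> acs_obj B i m" "acs_obj B i t' \<le> acs_obj B i m"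
    using assms(1,2) by (simp_all add: optimal_t_def)
  moreover have "acs_obj B i m < (acs_obj B i t + acs_obj B i t') / 2"
    unfolding m_def using assms(3,4) ne by (rule acs_obj_midpoint_t_less)
  ultimately show False by (simp add: field_simps)
qed

lemma acs_obj_cong:
  "(\<And>b. b < B \<Longrightarrow> i b = i' b) \<Longrightarrow> (\<And>b. b < B \<Longrightarrow> t b = t' b) \<Longrightarrow>
    acs_obj B i t = acs_obj B i' t'"
  unfolding acs_obj_def by (intro sum.cong) auto

lemma acs_energy_cong:
  "(\<And>b. b < B \<Longrightarrow> i b = i' b) \<Longrightarrow> (\<And>b. b < B \<Longrightarrow> t b = t' b) \<Longrightarrow>
    acs_energy B i t = acs_energy B i' t'"
  unfolding acs_energy_def by (intro sum.cong) auto

lemma optimal_t_cong: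
  assumes "\<forall>b<B. i b = i' b"
  shows "optimal_t B E i t \<longleftrightarrow> optimal_t B E i' t"
proof -
  have "acs_obj B i = acs_obj B i'" "acs_energy B i = acs_energy B i'"
    using assms by (auto intro!: ext acs_obj_cong acs_energy_cong)
  thus ?thesis by (simp add: optimal_t_def feasible_t_def)
qed

lemma optimal_i_cong:
  assumes "\<forall>b<B. t b = t' b"
  shows "optimal_i B E \<epsilon> t i \<longleftrightarrow> optimal_i B E \<epsilon> t' i"
proof -
  have "(\<lambda>i. acs_obj B i t) = (\<lambda>i. acs_obj B i t')"
    "(\<lambda>i. acs_energy B i t) = (\<lambda>i. acs_energy B i t')"
    using assms by (auto intro!: ext acs_obj_cong acs_energy_cong)
  thus ?thesis unfolding optimal_i_def feasible_i_def by metis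
qed

lemma optimal_t_energy_eq:
  assumes opt: "optimal_t B E i t" and b: "b < B" and ib: "1 < i b"
  shows "acs_energy B i t = E"
proof (rule ccontr)
  assume "acs_energy B i t \<noteq> E"
  with opt have slack: "acs_energy B i t < E" by (simp add: optimal_t_def feasible_t_def)
  define s where "s = (E - acs_energy B i t) / (i b)\<^sup>2"
  have s: "0 < s" using slack ib by (simp add: s_def)
  define t' where "t' = t(b := t b + s)"
  have "acs_energy B i t' - acs_energy B i t = (i b)\<^sup>2 * s"
    unfolding acs_energy_def using b
    by (subst sum_diff_eq_sum_on_support[where S = "{b}"]) (auto simp: t'_def algebra_simps)
  hence "acs_energy B i t' = E" using ib by (simp add: s_def)
  hence "feasible_t B E i t'" using opt s by (auto simp: optimal_t_def feasible_t_def t'_def)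
  hence "acs_obj B i t \<le> acs_obj B i t'" using opt by (simp add: optimal_t_def)
  moreover have "acs_obj B i t' - acs_obj B i t
      = 4 ^ b * (exp (- 2 * (i b - 1) * (t b + s)) - exp (- 2 * (i b - 1) * t b))"
    unfolding acs_obj_def using b
    by (subst sum_diff_eq_sum_on_support[where S = "{b}"]) (auto simp: t'_def algebra_simps)
  moreover have "exp (- 2 * (i b - 1) * (t b + s)) < exp (- 2 * (i b - 1) * t b)"
    using s ib by (simp add: algebra_simps)
  hence "4 ^ b * (exp (- 2 * (i b - 1) * (t b + s)) - exp (- 2 * (i b - 1) * t b)) < (0::real)"
    by (intro mult_pos_neg) simp_all
  ultimately show False by linarith
qed

lemma optimal_t_exchange_le:
  assumes opt: "optimal_t B E i t" and j: "j < B" and k: "k < B"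
    and ijk: "i j = i k" and ik: "1 < i k" and tk: "0 < t k"
  shows "4 ^ j * exp (- 2 * (i j - 1) * t j) \<le> 4 ^ k * exp (- 2 * (i k - 1) * t k)"
proof (cases "j = k")
  case False
  define \<alpha> where "\<alpha> = 2 * (i k - 1)"
  define g where "g h = 4 ^ j * exp (- \<alpha> * (t j + h)) + 4 ^ k * exp (- \<alpha> * (t k - h))" for h :: real
  have "g 0 \<le> g (0 + h)" if h: "0 < h" "h \<le> t k" for h
  proof -
    define t' where "t' = t(j := t j + h, k := t k - h)"
    have "acs_energy B i t' - acs_energy B i t = 0"
      unfolding acs_energy_def using j k ijk False
      by (subst sum_diff_eq_sum_on_support[where S = "{j, k}"]) (auto simp: t'_def algebra_simps)
    hence "feasible_t B E i t'"
      using opt h by (auto simp: optimal_t_def feasible_t_def t'_def)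
    hence "acs_obj B i t \<le> acs_obj B i t'" using opt by (simp add: optimal_t_def)
    moreover have "acs_obj B i t' - acs_obj B i t = g h - g 0"
      unfolding acs_obj_def using j k ijk False
      by (subst sum_diff_eq_sum_on_support[where S = "{j, k}"])
        (auto simp: t'_def g_def \<alpha>_def algebra_simps)
    ultimately show ?thesis by simp
  qed
  moreover have "(g has_real_derivative
      \<alpha> * (4 ^ k * exp (- \<alpha> * t k) - 4 ^ j * exp (- \<alpha> * t j))) (at 0)"
    unfolding g_def by (auto intro!: derivative_eq_intros simp: algebra_simps)
  ultimately have "0 \<le> \<alpha> * (4 ^ k * exp (- \<alpha> * t k) - 4 ^ j * exp (- \<alpha> * t j))"
    using tk by (intro DERIV_nonneg_if_right_local_min) auto
  moreover have "0 < \<alpha>" using ik by (simp add: \<alpha>_def)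
  ultimately show ?thesis using ijk by (simp add: \<alpha>_def zero_le_mult_iff)
qed simp

lemma optimal_i_const_if_optimal_t_pos:
  assumes opt: "optimal_t B E i t" and i: "\<forall>b<B. i b = a" and a: "1 < a" "1 + \<epsilon> \<le> a"
    and B: "0 < B" and t: "\<forall>b<B. 0 < t b"
  shows "optimal_i B E \<epsilon> t i"
proof -
  define c where "c = exp (- 2 * (a - 1) * t 0)"
  have level: "4 ^ b * exp (- 2 * (a - 1) * t b) = c" if b: "b < B" for b
    using optimal_t_exchange_le[OF opt B b] optimal_t_exchange_le[OF opt b B] i t a b B
    by (simp add: c_def)
  have energy: "acs_energy B i t = E"
    using optimal_t_energy_eq[OF opt B] i a B by simp
  have obj: "acs_obj B i t = (\<Sum>b<B. c)"
    unfolding acs_obj_def using i level by (intro sum.cong) auto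
  have "acs_obj B i t \<le> acs_obj B i' t" if "feasible_i B E \<epsilon> t i'" for i'
  proof -
    have "2 * a * ((i' b - a) * t b) \<le> (i' b)\<^sup>2 * t b - (i b)\<^sup>2 * t b" if b: "b < B" for b
    proof -
      have "0 \<le> (i' b - a)\<^sup>2 * t b" using t b by (simp add: less_imp_le)
      thus ?thesis using i b by (simp add: power2_eq_square algebra_simps)
    qed
    hence "2 * a * (\<Sum>b<B. (i' b - a) * t b) \<le> acs_energy B i' t - acs_energy B i t"
      unfolding acs_energy_def sum_distrib_left sum_subtractf[symmetric] by (intro sum_mono) auto
    also have "\<dots> \<le> 0" using that energy by (simp add: feasible_i_def)
    finally have lin: "(\<Sum>b<B. (i' b - a) * t b) \<le> 0"
      using a by (simp add: mult_le_0_iff)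
    have "c - 2 * c * ((i' b - a) * t b) \<le> 4 ^ b * exp (- 2 * (i' b - 1) * t b)" if b: "b < B" for b
    proof -
      have "exp (- 2 * (i' b - 1) * t b) = exp (- 2 * (a - 1) * t b) * exp (- 2 * (i' b - a) * t b)"
        by (simp add: algebra_simps flip: exp_add)
      also have "\<dots> \<ge> exp (- 2 * (a - 1) * t b) * (1 + - 2 * (i' b - a) * t b)"
        by (intro mult_left_mono exp_ge_add_one_self) auto
      finally show ?thesis
        using level[OF b] mult_left_mono[of _ _ "4 ^ b :: real"] by (fastforce simp: algebra_simps)
    qed
    hence "(\<Sum>b<B. c - 2 * c * ((i' b - a) * t b)) \<le> acs_obj B i' t"
      unfolding acs_obj_def by (intro sum_mono) auto
    moreover have "(\<Sum>b<B. c - 2 * c * ((i' b - a) * t b))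
        = acs_obj B i t - 2 * c * (\<Sum>b<B. (i' b - a) * t b)"
      by (simp add: obj sum_subtractf sum_distrib_left)
    moreover have "0 \<le> c" by (simp add: c_def)
    ultimately show ?thesis using lin by (smt (verit) mult_nonneg_nonpos)
  qed
  moreover have "feasible_i B E \<epsilon> t i" using energy i a by (simp add: feasible_i_def)
  ultimately show ?thesis by (simp add: optimal_i_def)
qed

lemma acs_run_stationary:
  assumes run: "acs_run B E \<epsilon> I T" and fixed: "optimal_i B E \<epsilon> (T 1) (I 0)"
    and T1: "\<forall>b<B. 0 < T 1 b" and I0: "\<forall>b<B. I 0 b \<noteq> 1"
  shows "\<forall>b<B. I k b = I 0 b \<and> T (Suc k) b = T 1 b"
proof (induction k)
  case (Suc k)
  have "\<forall>b<B. T (Suc k) b = T 1 b" using Suc.IH by blast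
  moreover have "optimal_i B E \<epsilon> (T (Suc k)) (I (Suc k))" using run by (simp add: acs_run_def)
  ultimately have "optimal_i B E \<epsilon> (T 1) (I (Suc k))" by (simp only: optimal_i_cong)
  moreover have "\<forall>b<B. 0 \<le> T 1 b" "\<forall>b<B. T 1 b \<noteq> 0" using T1 by auto
  ultimately have I: "\<forall>b<B. I (Suc k) b = I 0 b"
    using fixed optimal_i_unique by blast
  have "optimal_t B E (I (Suc k)) (T (Suc (Suc k)))" using run by (simp add: acs_run_def)
  with I have "optimal_t B E (I 0) (T (Suc (Suc k)))" by (simp only: optimal_t_cong)
  moreover have "optimal_t B E (I 0) (T 1)"
    using run unfolding acs_run_def by (metis One_nat_def)
  ultimately have "\<forall>b<B. T (Suc (Suc k)) b = T 1 b"
    using I0 optimal_t_unique[of B E "I 0"] by blast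
  with I show ?case by simp
qed simp

theorem corollary1:
  fixes B :: nat and E \<epsilon> :: real
    and I T :: "nat \<Rightarrow> nat \<Rightarrow> real"
  assumes "B \<ge> 1" and "E > 0" and "0 < \<epsilon>" and "\<epsilon> \<le> 1"
    and "\<forall>b<B. I 0 b = 2"
    and "acs_run B E \<epsilon> I T"
    and "\<forall>b<B. T 1 b \<noteq> 0"
  shows "\<forall>b<B. (\<lambda>k. I k b) \<longlonglongrightarrow> I 0 b \<and> (\<lambda>k. T k b) \<longlonglongrightarrow> T 1 b"
proof -
  have opt: "optimal_t B E (I 0) (T 1)"
    using assms(6) unfolding acs_run_def by (metis One_nat_def)
  hence "\<forall>b<B. 0 \<le> T 1 b" by (simp add: optimal_t_def feasible_t_def)
  with assms(7) have T1: "\<forall>b<B. 0 < T 1 b" by (auto simp: less_le)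
  have "optimal_i B E \<epsilon> (T 1) (I 0)"
    by (rule optimal_i_const_if_optimal_t_pos[OF opt assms(5)]) (use assms(1,3,4) T1 in auto)
  moreover have "\<forall>b<B. I 0 b \<noteq> 1" using assms(5) by simp
  ultimately have stationary: "\<forall>b<B. I k b = I 0 b \<and> T (Suc k) b = T 1 b" for k
    by (rule acs_run_stationary[OF assms(6) _ T1])
  show ?thesis
  proof (intro allI impI conjI)
    fix b assume "b < B"
    hence "(\<lambda>k. I k b) = (\<lambda>k. I 0 b)" "(\<lambda>k. T (Suc k) b) = (\<lambda>k. T 1 b)"
      using stationary by (blast intro: ext)+
    thus "(\<lambda>k. I k b) \<longlonglongrightarrow> I 0 b" "(\<lambda>k. T k b) \<longlonglongrightarrow> T 1 b"
      by (simp_all add: LIMSEQ_imp_Suc)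
  qed
qed

end
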